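(* Let $(\mu_n,M_n)_{n\in\mathbb{N}}$ be i.i.d. pairs under a probability measure $Q$, with $\mu_n>0$ and $M_n\ge0$, such that $E_Q[|\log\mu_1|^{\delta}]<\infty$ for every $0<\delta<6$, $E_Q[\log\mu_1]=0$, and $\liminf_{t\to\infty}\big(t^{\lambda}Q[\log M_1>t]\big)>0$ for some $0<\lambda<2$. Define $X_0:=0$ and $X_n:=\mu_nX_{n-1}+M_n$ for $n\in\mathbb{N}$. Then $Q$-a.s. $X_n>e^{\sqrt n}$ for all sufficiently large $n$; in fact $\sum_{n\ge1}Q[X_n\le e^{\sqrt n}]<\infty$. *)

theory Defs
  imports "HOL-Probability.Probability"
begin

fun Xrec :: "(nat \<Rightarrow> 'a \<Rightarrow> real) \<Rightarrow> (nat \<Rightarrow> 'a \<Rightarrow> real) \<Rightarrow> nat \<Rightarrow> 'a \<Rightarrow> real" where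
  "Xrec mu M 0 x = 0"
| "Xrec mu M (Suc n) x = mu (Suc n) x * Xrec mu M n x + M (Suc n) x"

end

theory Submission
  imports Defs "HOL-Real_Asymp.Real_Asymp"
begin

(*
  X_n dominates each term (\<Prod>k<i\<le>n. mu_i) M_k of its expansion.  Look at the window
  k \<in> {n-m..n} with m \<approx> n^a.  If X_n \<le> e^sqrt n, then either no ln M_k in the window exceeds
  3 sqrt n, or some ln mu_i in the window lies below -B = -n^(a/2), or for some k the random
  walk \<Sum>k<i\<le>n. ln mu_i, truncated from below at -B, ends below -2 sqrt n.  By independence and
  the tail assumption the first event has probability at most exp (-c n^(a - lam/2)); by Markov's
  inequality for |ln mu_1|^5 the second has probability O(n^(-3a/2)); an exponential Chernoff
  bound with s = 1/B (the truncated steps have nonnegative mean and second moment at most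
  E (ln mu_1)^2) bounds the third by O(n^a exp (-2 n^((1-a)/2))).  These are summable, and
  Borel-Cantelli gives the almost sure statement.
*)

lemma exp_minus_le_quadratic:
  fixes y :: real
  assumes "-1 \<le> y"
  shows "exp (-y) \<le> 1 - y + y^2"
proof (cases "y \<le> 0")
  case True
  then show ?thesis using exp_bound[of "-y"] assms by (simp add: power2_eq_square)
next
  case False
  then have "0 < 1 + y" by simp
  have "exp (-y) \<le> 1 / (1 + y)"
    using le_imp_inverse_le[OF exp_ge_add_one_self \<open>0 < 1 + y\<close>] by (simp add: exp_minus divide_inverse)
  also have "\<dots> \<le> 1 - y + y^2"
  proof -
    have "1 \<le> (1 - y + y^2) * (1 + y)"
      using False by (simp add: algebra_simps power2_eq_square power3_eq_cube)
    then show ?thesis using \<open>0 < 1 + y\<close> by (simp add: divide_le_eq)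
  qed
  finally show ?thesis .
qed

lemma one_plus_power_le_exp:
  fixes y :: real
  assumes "0 \<le> y"
  shows "(1 + y) ^ m \<le> exp (real m * y)"
proof -
  have "(1 + y) ^ m \<le> exp y ^ m"
    using assms by (intro power_mono) (auto simp: add_nonneg_nonneg)
  then show ?thesis by (simp add: exp_of_nat_mult)
qed

lemma summable_exp_neg_powr:
  fixes c e :: real
  assumes "0 < c" "0 < e"
  shows "summable (\<lambda>n::nat. exp (- c * real n powr e))"
proof (rule summable_comparison_test_bigo)
  show "summable (\<lambda>n::nat. norm (real n powr -2))" by (simp add: summable_real_powr_iff)
  show "(\<lambda>n::nat. exp (- c * real n powr e)) \<in> O(\<lambda>n. real n powr -2)"
    using assms by real_asymp
qed

lemma summable_powr_mult_exp_neg_powr: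
  fixes c e K :: real
  assumes "0 < c" "0 < e"
  shows "summable (\<lambda>n::nat. real n powr K * exp (- c * real n powr e))"
proof (rule summable_comparison_test_bigo)
  show "summable (\<lambda>n::nat. norm (real n powr -2))" by (simp add: summable_real_powr_iff)
  show "(\<lambda>n::nat. real n powr K * exp (- c * real n powr e)) \<in> O(\<lambda>n. real n powr -2)"
    using assms by real_asymp
qed

lemma exp_walk_exponent_le:
  fixes x a v :: real
  assumes x: "1 < x" and m: "real m \<le> x powr a" and "0 \<le> v"
  shows "exp ((x powr (- a / 2))^2 * v * m - x powr (- a / 2) * (2 * sqrt x))
    \<le> exp v * exp (-2 * x powr ((1 - a) / 2))"
proof -
  have "(x powr (- a / 2))^2 = x powr (- a)"
    using x by (simp add: power2_eq_square powr_add[symmetric])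
  then have "real m * (x powr (- a / 2))^2 \<le> x powr a * x powr (- a)"
    using m by (simp add: mult_right_mono)
  then have "real m * (x powr (- a / 2))^2 \<le> 1" using x by (simp add: powr_add[symmetric])
  from mult_right_mono[OF this \<open>0 \<le> v\<close>]
  have "(x powr (- a / 2))^2 * v * m \<le> v" by (simp add: mult_ac)
  moreover have "x powr (- a / 2) * sqrt x = x powr ((1 - a) / 2)"
    using x by (simp add: powr_half_sqrt[symmetric] powr_add[symmetric] diff_divide_distrib)
  ultimately show ?thesis
    by (simp add: exp_add[symmetric])
qed

lemma Xrec_nonneg:
  assumes "\<And>i. 1 \<le> i \<Longrightarrow> 0 < mu i x" "\<And>i. 1 \<le> i \<Longrightarrow> 0 \<le> M i x"
  shows "0 \<le> Xrec mu M n x"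
  by (induction n) (auto intro!: add_nonneg_nonneg mult_nonneg_nonneg less_imp_le[OF assms(1)] assms(2))

lemma prod_mult_le_Xrec:
  assumes mu: "\<And>i. 1 \<le> i \<Longrightarrow> 0 < mu i x" and M: "\<And>i. 1 \<le> i \<Longrightarrow> 0 \<le> M i x"
    and "1 \<le> k" "k \<le> n"
  shows "(\<Prod>i\<in>{k<..n}. mu i x) * M k x \<le> Xrec mu M n x"
  using \<open>k \<le> n\<close>
proof (induction n)
  case 0
  then show ?case using \<open>1 \<le> k\<close> by simp
next
  case (Suc n)
  show ?case
  proof (cases "k = Suc n")
    case True
    have "0 \<le> Xrec mu M n x" using mu M by (rule Xrec_nonneg)
    then show ?thesis using True mu[of "Suc n"] by simp
  next
    case False
    then have "k \<le> n" using Suc.prems by simp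
    then have "{k<..Suc n} = insert (Suc n) {k<..n}" by auto
    then have "(\<Prod>i\<in>{k<..Suc n}. mu i x) * M k x = mu (Suc n) x * ((\<Prod>i\<in>{k<..n}. mu i x) * M k x)"
      by simp
    also have "\<dots> \<le> mu (Suc n) x * Xrec mu M n x"
      using Suc.IH[OF \<open>k \<le> n\<close>] mu[of "Suc n"] by (simp add: mult_left_mono)
    also have "\<dots> \<le> Xrec mu M (Suc n) x"
      using M[of "Suc n"] by simp
    finally show ?thesis .
  qed
qed

lemma measurable_Xrec:
  assumes "\<And>i. 1 \<le> i \<Longrightarrow> mu i \<in> borel_measurable N" "\<And>i. 1 \<le> i \<Longrightarrow> M i \<in> borel_measurable N"
  shows "Xrec mu M n \<in> borel_measurable N"
proof (induction n)
  case 0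
  have "Xrec mu M 0 = (\<lambda>x. 0)" by auto
  then show ?case by simp
next
  case (Suc n)
  have "Xrec mu M (Suc n) = (\<lambda>x. mu (Suc n) x * Xrec mu M n x + M (Suc n) x)" by auto
  then show ?case using Suc assms[of "Suc n"] by simp
qed

context prob_space
begin

lemma expectation_exp_neg_le:
  fixes eta :: "'a \<Rightarrow> real"
  assumes int: "integrable M eta" "integrable M (\<lambda>x. (eta x)^2)"
    and lower: "\<And>x. x \<in> space M \<Longrightarrow> -B \<le> eta x"
    and s: "0 < s" "s * B \<le> 1"
    and mean: "0 \<le> expectation eta" and second: "expectation (\<lambda>x. (eta x)^2) \<le> v"
  shows "integrable M (\<lambda>x. exp (- s * eta x))"
    and "expectation (\<lambda>x. exp (- s * eta x)) \<le> 1 + s^2 * v"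
proof -
  have [measurable]: "eta \<in> borel_measurable M" using int(1) by auto
  have s_eta: "- (s * eta x) \<le> s * B" if "x \<in> space M" for x
    using mult_left_mono[OF lower[OF that], of s] s by simp
  show int_exp: "integrable M (\<lambda>x. exp (- s * eta x))"
    by (rule integrable_const_bound[where B="exp (s * B)"]) (use s_eta in \<open>auto intro!: AE_I2\<close>)
  have "expectation (\<lambda>x. exp (- s * eta x)) \<le> expectation (\<lambda>x. 1 - s * eta x + s^2 * (eta x)^2)"
  proof (rule integral_mono[OF int_exp])
    show "integrable M (\<lambda>x. 1 - s * eta x + s^2 * (eta x)^2)" using int by auto
    show "exp (- s * eta x) \<le> 1 - s * eta x + s^2 * (eta x)^2" if "x \<in> space M" for x
      using exp_minus_le_quadratic[of "s * eta x"] s_eta[OF that] s(2) by (simp add: power_mult_distrib)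
  qed
  also have "\<dots> = 1 - s * expectation eta + s^2 * expectation (\<lambda>x. (eta x)^2)"
    using int by (simp add: prob_space)
  also have "\<dots> \<le> 1 + s^2 * v"
    using mult_left_mono[OF second, of "s^2"] mult_nonneg_nonneg[OF less_imp_le[OF s(1)] mean] by simp
  finally show "expectation (\<lambda>x. exp (- s * eta x)) \<le> 1 + s^2 * v" .
qed

lemma prob_indep_sum_le_neg:
  fixes eta :: "'i \<Rightarrow> 'a \<Rightarrow> real"
  assumes I: "finite I" and indep: "indep_vars (\<lambda>_. borel) eta I"
    and int: "\<And>i. i \<in> I \<Longrightarrow> integrable M (eta i)" "\<And>i. i \<in> I \<Longrightarrow> integrable M (\<lambda>x. (eta i x)^2)"
    and lower: "\<And>i x. i \<in> I \<Longrightarrow> x \<in> space M \<Longrightarrow> -B \<le> eta i x"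
    and s: "0 < s" "s * B \<le> 1"
    and mean: "\<And>i. i \<in> I \<Longrightarrow> 0 \<le> expectation (eta i)"
    and second: "\<And>i. i \<in> I \<Longrightarrow> expectation (\<lambda>x. (eta i x)^2) \<le> v" and "0 \<le> v"
  shows "prob {x \<in> space M. (\<Sum>i\<in>I. eta i x) \<le> -c} \<le> exp (s^2 * v * card I - s * c)"
proof -
  define Y where "Y i = (\<lambda>x. exp (- s * eta i x))" for i
  note EY = expectation_exp_neg_le[OF int lower s mean second, folded Y_def]
  have indep_Y: "indep_vars (\<lambda>_. borel) Y I"
    unfolding Y_def by (rule indep_vars_compose2[OF indep]) measurable
  have prod_Y: "(\<Prod>i\<in>I. Y i x) = exp (- s * (\<Sum>i\<in>I. eta i x))" for x
    using I by (simp add: Y_def exp_sum sum_distrib_left)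
  have scaled: "s * c \<le> - (s * t) \<longleftrightarrow> t \<le> - c" for t
    using mult_le_cancel_left_pos[OF s(1), of c "- t"] by auto
  have "{x \<in> space M. (\<Sum>i\<in>I. eta i x) \<le> -c} = {x \<in> space M. exp (s * c) \<le> (\<Prod>i\<in>I. Y i x)}"
    by (auto simp: prod_Y scaled)
  then have "prob {x \<in> space M. (\<Sum>i\<in>I. eta i x) \<le> -c} \<le> expectation (\<lambda>x. \<Prod>i\<in>I. Y i x) / exp (s * c)"
    using indep_vars_integrable[OF I indep_Y EY(1)]
    by (simp only:) (rule integral_Markov_inequality_measure[where A="space M"], auto simp: Y_def prod_nonneg)
  also have "\<dots> = exp (- s * c) * (\<Prod>i\<in>I. expectation (Y i))"
    by (simp add: indep_vars_lebesgue_integral[OF I indep_Y EY(1)] exp_minus divide_inverse)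
  also have "\<dots> \<le> exp (- s * c) * (\<Prod>i\<in>I. 1 + s^2 * v)"
    using EY by (intro mult_left_mono prod_mono conjI integral_nonneg_AE AE_I2) (auto simp: Y_def)
  also have "\<dots> \<le> exp (- s * c) * exp (card I * (s^2 * v))"
    using \<open>0 \<le> v\<close> by (simp add: one_plus_power_le_exp)
  finally show ?thesis by (simp add: exp_add[symmetric] algebra_simps)
qed

lemma prob_INT_indep_le_exp:
  assumes "finite I" "I \<noteq> {}" and indep: "indep_events A I"
    and "\<And>i. i \<in> I \<Longrightarrow> prob (A i) \<le> 1 - q"
  shows "prob (\<Inter>i\<in>I. A i) \<le> exp (- q * card I)"
proof -
  have "prob (\<Inter>i\<in>I. A i) = (\<Prod>i\<in>I. prob (A i))"
    using indep assms(1,2) unfolding indep_events_def by auto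
  also have "\<dots> \<le> (\<Prod>i\<in>I. exp (- q))"
    using assms(4) exp_ge_add_one_self[of "- q"] by (intro prod_mono) fastforce
  also have "\<dots> = exp (- q * card I)"
    by (simp add: exp_of_nat_mult[symmetric] mult.commute)
  finally show ?thesis .
qed

end

locale iid_affine_recursion = prob_space Q for Q :: "'a measure" +
  fixes mu M :: "nat \<Rightarrow> 'a \<Rightarrow> real" and lam :: real
  assumes meas_mu: "\<And>n. n \<ge> 1 \<Longrightarrow> mu n \<in> borel_measurable Q"
    and meas_M: "\<And>n. n \<ge> 1 \<Longrightarrow> M n \<in> borel_measurable Q"
    and indep: "indep_vars (\<lambda>_. borel \<Otimes>\<^sub>M borel) (\<lambda>n x. (mu n x, M n x)) {1..}"
    and ident: "\<And>n. n \<ge> 1 \<Longrightarrow>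
        distr Q (borel \<Otimes>\<^sub>M borel) (\<lambda>x. (mu n x, M n x)) = distr Q (borel \<Otimes>\<^sub>M borel) (\<lambda>x. (mu 1 x, M 1 x))"
    and mu_pos: "\<And>n x. n \<ge> 1 \<Longrightarrow> x \<in> space Q \<Longrightarrow> mu n x > 0"
    and M_nonneg: "\<And>n x. n \<ge> 1 \<Longrightarrow> x \<in> space Q \<Longrightarrow> M n x \<ge> 0"
    and moments: "\<And>\<delta>::real. 0 < \<delta> \<Longrightarrow> \<delta> < 6 \<Longrightarrow> integrable Q (\<lambda>x. \<bar>ln (mu 1 x)\<bar> powr \<delta>)"
    and centered: "(\<integral>x. ln (mu 1 x) \<partial>Q) = 0"
    and lam: "0 < lam" "lam < 2"
    and tail: "Liminf at_top (\<lambda>t::real. ereal (t powr lam * measure Q {x \<in> space Q. ln (M 1 x) > t})) > 0"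
begin

lemma measurable_pair: "1 \<le> i \<Longrightarrow> (\<lambda>x. (mu i x, M i x)) \<in> Q \<rightarrow>\<^sub>M borel \<Otimes>\<^sub>M borel"
  using meas_mu meas_M by (auto intro!: measurable_Pair)

lemma integral_iid:
  assumes "1 \<le> i" "g \<in> borel_measurable (borel \<Otimes>\<^sub>M borel)"
  shows "(\<integral>x. g (mu i x, M i x) \<partial>Q) = (\<integral>x. g (mu 1 x, M 1 x) \<partial>Q :: real)"
  using integral_distr[OF measurable_pair[OF assms(1)] assms(2), symmetric]
    integral_distr[OF measurable_pair[of 1] assms(2)] ident[OF assms(1)] by simp

lemma integrable_iid:
  assumes "1 \<le> i" "g \<in> borel_measurable (borel \<Otimes>\<^sub>M borel)"
  shows "integrable Q (\<lambda>x. g (mu i x, M i x) :: real) \<longleftrightarrow> integrable Q (\<lambda>x. g (mu 1 x, M 1 x))"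
  using integrable_distr_eq[OF measurable_pair[OF assms(1)] assms(2), symmetric]
    integrable_distr_eq[OF measurable_pair[of 1] assms(2)] ident[OF assms(1)] by simp

lemma prob_iid:
  assumes "1 \<le> i" and P: "Measurable.pred (borel \<Otimes>\<^sub>M borel) P"
  shows "prob {x \<in> space Q. P (mu i x, M i x)} = prob {x \<in> space Q. P (mu 1 x, M 1 x)}"
proof -
  have P_sets: "{z. P z} \<in> sets (borel \<Otimes>\<^sub>M borel)"
    using P by (simp add: pred_def space_pair_measure)
  have "prob {x \<in> space Q. P (mu j x, M j x)} = measure (distr Q (borel \<Otimes>\<^sub>M borel) (\<lambda>x. (mu j x, M j x))) {z. P z}"
    if "1 \<le> j" for j
    by (subst measure_distr[OF measurable_pair[OF that] P_sets]) (auto intro!: arg_cong[where f=prob])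
  from this[of i] this[of 1] show ?thesis using ident[OF assms(1)] assms(1) by simp
qed

definition second_moment :: real where
  "second_moment = expectation (\<lambda>x. (ln (mu 1 x))^2)"

definition fifth_moment :: real where
  "fifth_moment = expectation (\<lambda>x. \<bar>ln (mu 1 x)\<bar> powr 5)"

definition tail_log_M :: "real \<Rightarrow> real" where
  "tail_log_M t = prob {x \<in> space Q. ln (M 1 x) > t}"

lemma second_moment_nonneg: "0 \<le> second_moment"
  unfolding second_moment_def by (intro integral_nonneg_AE AE_I2) simp

lemma fifth_moment_nonneg: "0 \<le> fifth_moment"
  unfolding fifth_moment_def by (intro integral_nonneg_AE AE_I2) simp

lemma tail_log_M_nonneg: "0 \<le> tail_log_M t"
  by (simp add: tail_log_M_def)

lemma integrable_log_mu: "1 \<le> i \<Longrightarrow> integrable Q (\<lambda>x. ln (mu i x))"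
  using moments[of 1] meas_mu[of 1] integrable_iid[of i "\<lambda>z. ln (fst z)"]
  by (simp add: integrable_abs_iff)

lemma expectation_log_mu: "1 \<le> i \<Longrightarrow> expectation (\<lambda>x. ln (mu i x)) = 0"
  using integral_iid[of i "\<lambda>z. ln (fst z)"] centered by simp

lemma integrable_log_mu_sq: "1 \<le> i \<Longrightarrow> integrable Q (\<lambda>x. (ln (mu i x))^2)"
proof -
  have "\<bar>y\<bar> powr 2 = y^2" for y :: real
    by (cases "y = 0") (simp_all add: powr_realpow)
  then show "1 \<le> i \<Longrightarrow> ?thesis"
    using moments[of 2] integrable_iid[of i "\<lambda>z. (ln (fst z))^2"] by simp
qed

lemma expectation_log_mu_sq: "1 \<le> i \<Longrightarrow> expectation (\<lambda>x. (ln (mu i x))^2) = second_moment"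
  using integral_iid[of i "\<lambda>z. (ln (fst z))^2"] by (simp add: second_moment_def)

lemma prob_all_log_M_le:
  assumes I: "finite I" "I \<noteq> {}" "I \<subseteq> {1..}"
  shows "prob {x \<in> space Q. \<forall>k\<in>I. ln (M k x) \<le> t} \<le> exp (- tail_log_M t * card I)"
proof -
  define E where "E k = {x \<in> space Q. ln (snd (mu k x, M k x)) \<le> t}" for k
  have "indep_events E I"
    unfolding E_def
    by (rule indep_eventsI_indep_vars[OF indep_vars_subset[OF indep I(3)]]) measurable
  moreover have "prob (E k) \<le> 1 - tail_log_M t" if "k \<in> I" for k
  proof -
    have "1 \<le> k" using that I(3) by auto
    then have "tail_log_M t = prob {x \<in> space Q. ln (M k x) > t}"
      using prob_iid[of k "\<lambda>z. ln (snd z) > t"] unfolding tail_log_M_def by simp measurable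
    also have "\<dots> = prob (space Q - E k)"
      by (auto simp: E_def intro!: arg_cong[where f=prob])
    also have "\<dots> = 1 - prob (E k)"
      using meas_M[OF \<open>1 \<le> k\<close>] unfolding E_def snd_conv by (intro prob_compl) measurable
    finally show ?thesis by simp
  qed
  ultimately have "prob (\<Inter>k\<in>I. E k) \<le> exp (- tail_log_M t * card I)"
    using I by (intro prob_INT_indep_le_exp) auto
  moreover have "(\<Inter>k\<in>I. E k) = {x \<in> space Q. \<forall>k\<in>I. ln (M k x) \<le> t}"
    using I(2) by (auto simp: E_def)
  ultimately show ?thesis by simp
qed

lemma prob_ex_log_mu_less:
  assumes I: "finite I" "I \<subseteq> {1..}" and "0 < B"
  shows "prob {x \<in> space Q. \<exists>i\<in>I. ln (mu i x) < -B} \<le> card I * (fifth_moment / B powr 5)"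
proof -
  define E where "E i = {x \<in> space Q. ln (mu i x) < -B}" for i
  have E_bound: "prob (E i) \<le> fifth_moment / B powr 5" if "i \<in> I" for i
  proof -
    have "1 \<le> i" using that I by auto
    then have "prob (E i) = prob {x \<in> space Q. ln (mu 1 x) < -B}"
      using prob_iid[of i "\<lambda>z. ln (fst z) < -B"] unfolding E_def by simp measurable
    also have "\<dots> \<le> prob {x \<in> space Q. B powr 5 \<le> \<bar>ln (mu 1 x)\<bar> powr 5}"
      using meas_mu[of 1] \<open>0 < B\<close> by (intro finite_measure_mono) (auto intro!: powr_mono2)
    also have "\<dots> \<le> fifth_moment / B powr 5"
      unfolding fifth_moment_def using moments[of 5] meas_mu[of 1] \<open>0 < B\<close>
      by (intro integral_Markov_inequality_measure[where A="space Q"]) auto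
    finally show ?thesis .
  qed
  have E_events: "E i \<in> events" if "i \<in> I" for i
  proof -
    have [measurable]: "mu i \<in> borel_measurable Q" using that I meas_mu by auto
    show ?thesis unfolding E_def by measurable
  qed
  have "prob {x \<in> space Q. \<exists>i\<in>I. ln (mu i x) < -B} = prob (\<Union>i\<in>I. E i)"
    by (auto simp: E_def intro!: arg_cong[where f=prob])
  also have "\<dots> \<le> (\<Sum>i\<in>I. prob (E i))"
    using E_events I(1) by (intro finite_measure_subadditive_finite) auto
  also have "\<dots> \<le> card I * (fifth_moment / B powr 5)"
    using E_bound by (rule sum_bounded_above)
  finally show ?thesis .
qed

lemma prob_truncated_walk_le:
  assumes J: "finite J" "J \<subseteq> {1..}" and s: "0 < s" "0 < B" "s * B \<le> 1"
  shows "prob {x \<in> space Q. (\<Sum>i\<in>J. max (ln (mu i x)) (-B)) \<le> -c}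
    \<le> exp (s^2 * second_moment * card J - s * c)"
proof (rule prob_indep_sum_le_neg[OF J(1) _ _ _ _ s(1,3) _ _ second_moment_nonneg])
  have "indep_vars (\<lambda>_. borel) (\<lambda>i x. (\<lambda>z. max (ln (fst z)) (-B)) (mu i x, M i x)) {1..}"
    by (rule indep_vars_compose2[OF indep]) measurable
  then show "indep_vars (\<lambda>_. borel) (\<lambda>i x. max (ln (mu i x)) (-B)) J"
    using J(2) by (auto intro: indep_vars_subset)
  fix i assume "i \<in> J"
  then have i: "1 \<le> i" using J(2) by auto
  have abs_le: "\<bar>max (ln (mu i x)) (-B)\<bar> \<le> \<bar>ln (mu i x)\<bar>" for x
    using s(2) by (auto simp: max_def)
  have sq_le: "(max (ln (mu i x)) (-B))^2 \<le> (ln (mu i x))^2" for x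
    using abs_le[of x] abs_le_square_iff by blast
  have [measurable]: "mu i \<in> borel_measurable Q" using meas_mu[OF i] .
  show int: "integrable Q (\<lambda>x. max (ln (mu i x)) (-B))"
    by (rule Bochner_Integration.integrable_bound[OF integrable_log_mu[OF i]]) (use abs_le in auto)
  show int_sq: "integrable Q (\<lambda>x. (max (ln (mu i x)) (-B))^2)"
    by (rule Bochner_Integration.integrable_bound[OF integrable_log_mu_sq[OF i]])
      (use sq_le in auto)
  show "-B \<le> max (ln (mu i x)) (-B)" for x by simp
  show "0 \<le> expectation (\<lambda>x. max (ln (mu i x)) (-B))"
    using integral_mono[OF integrable_log_mu[OF i] int] expectation_log_mu[OF i] by simp
  show "expectation (\<lambda>x. (max (ln (mu i x)) (-B))^2) \<le> second_moment"
    using integral_mono[OF int_sq integrable_log_mu_sq[OF i] sq_le] expectation_log_mu_sq[OF i] by simp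
qed

lemma truncated_walk_le_if_Xrec_small:
  assumes x: "x \<in> space Q" and "1 \<le> k" "k \<le> n"
    and X: "Xrec mu M n x \<le> exp (sqrt n)" and M_large: "ln (M k x) > 3 * sqrt n"
    and no_small: "\<forall>i\<in>{k<..n}. -B \<le> ln (mu i x)"
  shows "(\<Sum>i\<in>{k<..n}. max (ln (mu i x)) (-B)) \<le> - (2 * sqrt n)"
proof -
  have mu: "0 < mu i x" if "1 \<le> i" for i using mu_pos[OF that x] .
  have "M k x \<noteq> 0"
    using M_large by (metis ln_0 not_less real_sqrt_ge_zero mult_nonneg_nonneg zero_le_numeral of_nat_0_le_iff)
  then have "M k x > 0" using M_nonneg[OF \<open>1 \<le> k\<close> x] by simp
  have "exp ((\<Sum>i\<in>{k<..n}. ln (mu i x)) + ln (M k x)) = (\<Prod>i\<in>{k<..n}. mu i x) * M k x"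
    using \<open>M k x > 0\<close> \<open>1 \<le> k\<close> mu by (simp add: exp_add exp_sum)
  also have "\<dots> \<le> exp (sqrt n)"
    using prod_mult_le_Xrec[where mu=mu and M=M and x=x, OF mu M_nonneg[OF _ x] \<open>1 \<le> k\<close> \<open>k \<le> n\<close>] X by simp
  finally have "(\<Sum>i\<in>{k<..n}. ln (mu i x)) \<le> - (2 * sqrt n)"
    using M_large by simp
  moreover have "(\<Sum>i\<in>{k<..n}. max (ln (mu i x)) (-B)) = (\<Sum>i\<in>{k<..n}. ln (mu i x))"
    using no_small by (intro sum.cong) auto
  ultimately show ?thesis by simp
qed

lemma truncated_walk_event:
  assumes "finite J" "J \<subseteq> {1..}"
  shows "{x \<in> space Q. (\<Sum>i\<in>J. max (ln (mu i x)) (-B)) \<le> c} \<in> events"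
proof -
  have "(\<lambda>x. \<Sum>i\<in>J. max (ln (mu i x)) (-B)) \<in> borel_measurable Q"
    using assms meas_mu by (intro borel_measurable_sum) auto
  then show ?thesis by measurable
qed

lemma Xrec_small_subset:
  assumes "m < n"
  shows "{x \<in> space Q. Xrec mu M n x \<le> exp (sqrt n)} \<subseteq>
      {x \<in> space Q. \<forall>k\<in>{n - m..n}. ln (M k x) \<le> 3 * sqrt n}
    \<union> {x \<in> space Q. \<exists>i\<in>{n - m..n}. ln (mu i x) < -B}
    \<union> (\<Union>k\<in>{n - m..n}. {x \<in> space Q. (\<Sum>i\<in>{k<..n}. max (ln (mu i x)) (-B)) \<le> - (2 * sqrt n)})"
    (is "_ \<subseteq> ?no_large_M \<union> ?small_mu \<union> ?walk_low")
proof (intro subsetI)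
  fix x assume "x \<in> {x \<in> space Q. Xrec mu M n x \<le> exp (sqrt n)}"
  then have x: "x \<in> space Q" and X: "Xrec mu M n x \<le> exp (sqrt n)" by auto
  show "x \<in> ?no_large_M \<union> ?small_mu \<union> ?walk_low"
  proof (cases "x \<in> ?no_large_M \<union> ?small_mu")
    case False
    then obtain k where k: "k \<in> {n - m..n}" "3 * sqrt n < ln (M k x)"
      using x by (auto simp: not_le)
    have "\<forall>i\<in>{k<..n}. -B \<le> ln (mu i x)"
      using False x k(1) by (auto simp: not_less)
    then have "(\<Sum>i\<in>{k<..n}. max (ln (mu i x)) (-B)) \<le> - (2 * sqrt n)"
      using truncated_walk_le_if_Xrec_small[OF x _ _ X k(2)] k(1) \<open>m < n\<close> by auto
    then show ?thesis using k(1) x by blast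
  qed auto
qed

lemma prob_ex_truncated_walk_le:
  assumes "m < n" and s: "0 < s" "0 < B" "s * B \<le> 1"
  shows "prob (\<Union>k\<in>{n - m..n}. {x \<in> space Q. (\<Sum>i\<in>{k<..n}. max (ln (mu i x)) (-B)) \<le> -c})
    \<le> (real m + 1) * exp (s^2 * second_moment * m - s * c)"
proof -
  define W where "W k = {x \<in> space Q. (\<Sum>i\<in>{k<..n}. max (ln (mu i x)) (-B)) \<le> -c}" for k
  have W_events: "W k \<in> events" if "k \<in> {n - m..n}" for k
    unfolding W_def using that \<open>m < n\<close> by (intro truncated_walk_event) auto
  have W_bound: "prob (W k) \<le> exp (s^2 * second_moment * m - s * c)" if "k \<in> {n - m..n}" for k
  proof -
    have "{k<..n} \<subseteq> {1..}" using that \<open>m < n\<close> by auto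
    then have "prob (W k) \<le> exp (s^2 * second_moment * card {k<..n} - s * c)"
      unfolding W_def by (intro prob_truncated_walk_le s) auto
    also have "\<dots> \<le> exp (s^2 * second_moment * m - s * c)"
      using that second_moment_nonneg by (auto intro!: mult_left_mono)
    finally show ?thesis .
  qed
  have "prob (\<Union>k\<in>{n - m..n}. W k) \<le> (\<Sum>k\<in>{n - m..n}. prob (W k))"
    using W_events by (intro finite_measure_subadditive_finite) auto
  also have "\<dots> \<le> card {n - m..n} * exp (s^2 * second_moment * m - s * c)"
    using W_bound by (rule sum_bounded_above)
  also have "\<dots> = (real m + 1) * exp (s^2 * second_moment * m - s * c)"
    using \<open>m < n\<close> by (simp add: Suc_diff_le)
  finally show ?thesis unfolding W_def .
qed

lemma prob_Xrec_small_le: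
  assumes "m < n" and B: "0 < B" and s: "0 < s" "s * B \<le> 1"
  shows "prob {x \<in> space Q. Xrec mu M n x \<le> exp (sqrt n)}
    \<le> exp (- tail_log_M (3 * sqrt n) * (real m + 1)) + (real m + 1) * (fifth_moment / B powr 5)
      + (real m + 1) * exp (s^2 * second_moment * m - s * (2 * sqrt n))"
proof -
  define I where "I = {n - m..n}"
  have I: "finite I" "I \<noteq> {}" "I \<subseteq> {1..}" "card I = m + 1"
    using \<open>m < n\<close> by (auto simp: I_def)
  define no_large_M where "no_large_M = {x \<in> space Q. \<forall>k\<in>I. ln (M k x) \<le> 3 * sqrt n}"
  define small_mu where "small_mu = {x \<in> space Q. \<exists>i\<in>I. ln (mu i x) < -B}"
  define walk_low where
    "walk_low = (\<Union>k\<in>I. {x \<in> space Q. (\<Sum>i\<in>{k<..n}. max (ln (mu i x)) (-B)) \<le> - (2 * sqrt n)})"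
  have "{x \<in> space Q. ln (M k x) \<le> 3 * sqrt n} \<in> events" "{x \<in> space Q. ln (mu k x) < -B} \<in> events"
    if "k \<in> I" for k
    using that I(3) meas_mu[of k] meas_M[of k] by auto
  then have events: "no_large_M \<in> events" "small_mu \<in> events"
    unfolding no_large_M_def small_mu_def using I(1)
    by (auto intro!: sets.sets_Collect_finite_All sets.sets_Collect_finite_Ex)
  have "walk_low \<in> events"
    unfolding walk_low_def using I by (auto intro!: truncated_walk_event)
  moreover have "{x \<in> space Q. Xrec mu M n x \<le> exp (sqrt n)} \<subseteq> no_large_M \<union> small_mu \<union> walk_low"
    unfolding no_large_M_def small_mu_def walk_low_def I_def using \<open>m < n\<close> by (rule Xrec_small_subset)
  ultimately have "prob {x \<in> space Q. Xrec mu M n x \<le> exp (sqrt n)} \<le> prob no_large_M + prob small_mu + prob walk_low"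
    using events by (meson finite_measure_mono measure_Un_le sets.Un order_trans add_right_mono)
  moreover have "prob no_large_M \<le> exp (- tail_log_M (3 * sqrt n) * (real m + 1))"
    using prob_all_log_M_le[OF I(1-3)] I(4) by (simp add: no_large_M_def add.commute)
  moreover have "prob small_mu \<le> (real m + 1) * (fifth_moment / B powr 5)"
    using prob_ex_log_mu_less[OF I(1,3) B] I(4) by (simp add: small_mu_def add.commute)
  moreover have "prob walk_low \<le> (real m + 1) * exp (s^2 * second_moment * m - s * (2 * sqrt n))"
    using prob_ex_truncated_walk_le[OF \<open>m < n\<close> s(1) B s(2), of "2 * sqrt n"]
    unfolding walk_low_def I_def by simp
  ultimately show ?thesis by linarith
qed

text \<open>The three error terms decay like exp (-c n^(a - lam/2)), n^(-3a/2) and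
  n^a exp (-2 n^((1-a)/2)); any exponent a with max (2/3) (lam/2) < a < 1 makes all of them summable.\<close>

definition window_exponent :: real where
  "window_exponent = (5 + lam) / 7"

lemma window_exponent_bounds: "2/3 < window_exponent" "window_exponent < 1" "lam / 2 < window_exponent"
  using lam unfolding window_exponent_def by auto

lemma prob_Xrec_small_le_powr:
  assumes "2 \<le> n"
  defines "a \<equiv> window_exponent"
  shows "prob {x \<in> space Q. Xrec mu M n x \<le> exp (sqrt n)}
    \<le> exp (- tail_log_M (3 * sqrt n) * n powr a) + 2 * fifth_moment * n powr (- 3/2 * a)
      + 2 * exp second_moment * (n powr a * exp (-2 * n powr ((1 - a) / 2)))"
proof -
  have a: "0 < a" "a < 1" using window_exponent_bounds by (auto simp: a_def)
  have n: "1 < real n" using assms(1) by simp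
  define m where "m = nat \<lfloor>n powr a\<rfloor>"
  have "1 \<le> n powr a" using n a by (simp add: ge_one_powr_ge_zero)
  moreover have m: "real m \<le> n powr a" "n powr a \<le> real m + 1"
    using \<open>1 \<le> n powr a\<close> by (auto simp: m_def)
  ultimately have m3: "real m + 1 \<le> 2 * n powr a" by linarith
  have "n powr a < n" using powr_less_mono[OF a(2) n] n by simp
  then have "m < n" using m(1) by linarith
  define B where "B = n powr (a / 2)"
  define s where "s = n powr (- a / 2)"
  have B: "0 < B" and s: "0 < s" "s * B = 1"
    using n by (simp_all add: B_def s_def powr_add[symmetric])
  note exp_walk_exponent_le[OF n m(1) second_moment_nonneg, folded s_def]
  then have "(real m + 1) * exp (s^2 * second_moment * m - s * (2 * sqrt n))
      \<le> (2 * n powr a) * (exp second_moment * exp (-2 * n powr ((1 - a) / 2)))"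
    using m3 by (intro mult_mono) auto
  then have T3: "(real m + 1) * exp (s^2 * second_moment * m - s * (2 * sqrt n))
      \<le> 2 * exp second_moment * (n powr a * exp (-2 * n powr ((1 - a) / 2)))"
    by (simp add: mult_ac)
  have T2: "(real m + 1) * (fifth_moment / B powr 5) \<le> 2 * fifth_moment * n powr (- 3/2 * a)"
  proof -
    have "fifth_moment / B powr 5 = fifth_moment * n powr (- 5/2 * a)"
      using n by (simp add: B_def powr_powr powr_minus_divide ac_simps)
    moreover have "n powr a * n powr (- 5/2 * a) = n powr (- 3/2 * a)"
      using n by (simp add: powr_add[symmetric])
    ultimately show ?thesis
      using mult_right_mono[OF m3, of "fifth_moment * n powr (- 5/2 * a)"] fifth_moment_nonneg
      by (simp add: mult_ac)
  qed
  have T1: "exp (- tail_log_M (3 * sqrt n) * (real m + 1)) \<le> exp (- tail_log_M (3 * sqrt n) * n powr a)"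
    using mult_left_mono[OF m(2) tail_log_M_nonneg] by simp
  have "s * B \<le> 1" using s(2) by simp
  then show ?thesis
    using prob_Xrec_small_le[OF \<open>m < n\<close> B s(1)] T1 T2 T3 by linarith
qed

lemma tail_log_M_eventually_ge:
  obtains c where "0 < c" "\<forall>\<^sub>F n in sequentially. c * real n powr (- lam / 2) \<le> tail_log_M (3 * sqrt n)"
proof -
  have "0 < Liminf at_top (\<lambda>t. ereal (t powr lam * tail_log_M t))"
    using tail unfolding tail_log_M_def .
  then obtain c :: real where c: "0 < ereal c" "ereal c < Liminf at_top (\<lambda>t. ereal (t powr lam * tail_log_M t))"
    using ereal_dense2 by blast
  have "filterlim (\<lambda>n::nat. 3 * sqrt (real n)) at_top sequentially"
    by real_asymp
  then have "\<forall>\<^sub>F n in sequentially. ereal c < ereal ((3 * sqrt n) powr lam * tail_log_M (3 * sqrt n))"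
    using filterlim_iff[THEN iffD1, rule_format, OF _ less_LiminfD[OF c(2)]] by simp
  then have "\<forall>\<^sub>F n in sequentially. c * 3 powr (- lam) * real n powr (- lam / 2) \<le> tail_log_M (3 * sqrt n)"
    using eventually_ge_at_top[of "1::nat"]
  proof eventually_elim
    case (elim n)
    define t where "t = 3 * sqrt (real n)"
    have "0 < t" using elim(2) by (simp add: t_def)
    have "c * 3 powr (- lam) * real n powr (- lam / 2) = c * t powr (- lam)"
      by (simp add: t_def powr_mult powr_half_sqrt[symmetric] powr_powr mult.assoc)
    also have "\<dots> < (t powr lam * tail_log_M t) * t powr (- lam)"
      using elim(1) \<open>0 < t\<close> by (intro mult_strict_right_mono) (auto simp: t_def)
    also have "\<dots> = tail_log_M t"
      using \<open>0 < t\<close> by (simp add: powr_minus field_simps)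
    finally show ?case unfolding t_def by linarith
  qed
  then show ?thesis using that[of "c * 3 powr (- lam)"] c(1) by simp
qed

lemma summable_prob_Xrec_small: "summable (\<lambda>n. prob {x \<in> space Q. Xrec mu M n x \<le> exp (sqrt n)})"
proof -
  define a where "a = window_exponent"
  have a: "2/3 < a" "a < 1" "lam / 2 < a" using window_exponent_bounds by (auto simp: a_def)
  obtain c where c: "0 < c" and tail_ge: "\<forall>\<^sub>F n in sequentially. c * real n powr (- lam / 2) \<le> tail_log_M (3 * sqrt n)"
    by (rule tail_log_M_eventually_ge)
  define g where "g n = exp (- c * real n powr (a - lam / 2)) + 2 * fifth_moment * real n powr (- 3/2 * a)
      + 2 * exp second_moment * (real n powr a * exp (-2 * real n powr ((1 - a) / 2)))" for n
  have "summable g"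
    unfolding g_def using a c
    by (intro summable_add summable_mult summable_exp_neg_powr summable_powr_mult_exp_neg_powr)
      (auto simp: summable_real_powr_iff)
  moreover have "\<forall>\<^sub>F n in sequentially. norm (prob {x \<in> space Q. Xrec mu M n x \<le> exp (sqrt n)}) \<le> g n"
    using tail_ge eventually_ge_at_top[of "2::nat"]
  proof eventually_elim
    case (elim n)
    have "c * real n powr (a - lam / 2) = c * real n powr (- lam / 2) * real n powr a"
      using elim(2) by (simp add: powr_add[symmetric])
    also have "\<dots> \<le> tail_log_M (3 * sqrt n) * real n powr a"
      using elim(1) by (intro mult_right_mono) auto
    finally have "exp (- tail_log_M (3 * sqrt n) * real n powr a) \<le> exp (- c * real n powr (a - lam / 2))"
      by simp
    then show ?case
      using prob_Xrec_small_le_powr[OF elim(2), folded a_def]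
      unfolding g_def real_norm_def abs_of_nonneg[OF measure_nonneg] by linarith
  qed
  ultimately show ?thesis by (rule summable_comparison_test_ev[rotated])
qed

theorem eventually_Xrec_gt_exp_sqrt:
  "(AE x in Q. \<forall>\<^sub>F n in sequentially. Xrec mu M n x > exp (sqrt (real n)))
   \<and> summable (\<lambda>n. prob {x \<in> space Q. Xrec mu M (Suc n) x \<le> exp (sqrt (real (Suc n)))})"
proof
  have [measurable]: "Xrec mu M n \<in> borel_measurable Q" for n
    using meas_mu meas_M by (rule measurable_Xrec)
  have "{x \<in> space Q. Xrec mu M n x \<le> exp (sqrt n)} \<in> events" for n
    by measurable
  then have "AE x in Q. \<forall>\<^sub>F n in sequentially. x \<in> space Q - {x \<in> space Q. Xrec mu M n x \<le> exp (sqrt n)}"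
    using summable_prob_Xrec_small by (intro borel_cantelli_AE1) (auto simp: less_top[symmetric])
  then show "AE x in Q. \<forall>\<^sub>F n in sequentially. Xrec mu M n x > exp (sqrt (real n))"
    by (rule AE_mp) (auto elim!: eventually_mono intro!: AE_I2)
  show "summable (\<lambda>n. prob {x \<in> space Q. Xrec mu M (Suc n) x \<le> exp (sqrt (real (Suc n)))})"
    using summable_prob_Xrec_small by (subst summable_Suc_iff)
qed

end

theorem mainTheorem6:
  fixes Q :: "'a measure" and mu M :: "nat \<Rightarrow> 'a \<Rightarrow> real" and lam :: real
  assumes "prob_space Q"
    and meas_mu: "\<And>n. n \<ge> 1 \<Longrightarrow> mu n \<in> borel_measurable Q"
    and meas_M: "\<And>n. n \<ge> 1 \<Longrightarrow> M n \<in> borel_measurable Q"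
    and indep: "prob_space.indep_vars Q (\<lambda>_. borel \<Otimes>\<^sub>M borel) (\<lambda>n x. (mu n x, M n x)) {1..}"
    and ident: "\<And>n. n \<ge> 1 \<Longrightarrow>
        distr Q (borel \<Otimes>\<^sub>M borel) (\<lambda>x. (mu n x, M n x)) = distr Q (borel \<Otimes>\<^sub>M borel) (\<lambda>x. (mu 1 x, M 1 x))"
    and mu_pos: "\<And>n x. n \<ge> 1 \<Longrightarrow> x \<in> space Q \<Longrightarrow> mu n x > 0"
    and M_nonneg: "\<And>n x. n \<ge> 1 \<Longrightarrow> x \<in> space Q \<Longrightarrow> M n x \<ge> 0"
    and moments: "\<And>\<delta>::real. 0 < \<delta> \<Longrightarrow> \<delta> < 6 \<Longrightarrow> integrable Q (\<lambda>x. \<bar>ln (mu 1 x)\<bar> powr \<delta>)"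
    and centered: "(\<integral>x. ln (mu 1 x) \<partial>Q) = 0"
    and lam: "0 < lam" "lam < 2"
    and tail: "Liminf at_top (\<lambda>t::real. ereal (t powr lam * measure Q {x \<in> space Q. ln (M 1 x) > t})) > 0"
  shows "(AE x in Q. \<forall>\<^sub>F n in sequentially. Xrec mu M n x > exp (sqrt (real n)))
         \<and> summable (\<lambda>n. measure Q {x \<in> space Q. Xrec mu M (Suc n) x \<le> exp (sqrt (real (Suc n)))})"
proof -
  have "iid_affine_recursion Q mu M lam"
    unfolding iid_affine_recursion_def iid_affine_recursion_axioms_def using assms by blast
  then interpret iid_affine_recursion Q mu M lam .
  show ?thesis by (rule eventually_Xrec_gt_exp_sqrt)
qed

end
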